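(* Let $G^*=(V_L,V_R,E^* )$ be drawn uniformly from $\mathcal{G}_{m,n,s,t}$ (assumed nonempty), and let $F$ be a viable set of edges. (1) Let $u\in V_L$ with $\deg_F(u)<t$, and let $v$ be uniformly sampled from $N_{G^*}(u)\setminus N_F(u)$. Then $$\Pr_{G^*,v}\left[\deg_F(v)>0\ \middle|\ F\subseteq E^*\right]\le\frac{|\{x\in V_R:\deg_F(x)>0\}|}{|V_R|}.$$ (2) Let $u\in V_R$ with $\deg_F(u)<s$, and let $v$ be uniformly sampled from $N_{G^*}(u)\setminus N_F(u)$. Then $$\Pr_{G^*,v}\left[\deg_F(v)>0\ \middle|\ F\subseteq E^*\right]\le\frac{|\{x\in V_L:\deg_F(x)>0\}|}{|V_L|}.$$
   Context: $\mathcal{G}_{m,n,s,t}$ is the set of bipartite graphs on fixed vertex sets $V_L$ ($|V_L|=n$, each of degree $t$) and $V_R$ ($|V_R|=m$, each of degree $s$). For a set of edges $F\subseteq\binom{V_L\cup V_R}{2}$ and a vertex $v$, $N_F(v)=\{u:\{v,u\}\in F\}$ and $\deg_F(v)=|N_F(v)|$. $F$ is viable if $F\subseteq E(G)$ for some $G\in\mathcal{G}_{m,n,s,t}$. *)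

theory Defs
  imports "HOL-Probability.Probability_Mass_Function"
begin

definition nbr :: "'a set set \<Rightarrow> 'a \<Rightarrow> 'a set" where
  "nbr F v = {u. {v, u} \<in> F}"

definition deg :: "'a set set \<Rightarrow> 'a \<Rightarrow> nat" where
  "deg F v = card (nbr F v)"

text \<open>The class G_{m,n,s,t}: bipartite graphs (as edge sets) between the fixed
  vertex sets VL (|VL| = n, each vertex of degree t) and VR (|VR| = m, each of degree s).\<close>
definition bip_graphs :: "'a set \<Rightarrow> 'a set \<Rightarrow> nat \<Rightarrow> nat \<Rightarrow> 'a set set set" where
  "bip_graphs VL VR s t =
     {E. E \<subseteq> {{x, y} | x y. x \<in> VL \<and> y \<in> VR}
         \<and> (\<forall>x\<in>VL. deg E x = t) \<and> (\<forall>y\<in>VR. deg E y = s)}"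

definition viable :: "'a set \<Rightarrow> 'a set \<Rightarrow> nat \<Rightarrow> nat \<Rightarrow> 'a set set \<Rightarrow> bool" where
  "viable VL VR s t F \<longleftrightarrow> (\<exists>G\<in>bip_graphs VL VR s t. F \<subseteq> G)"

text \<open>Joint law of (G*, v): G* uniform on G_{m,n,s,t} conditioned on F \<subseteq> E(G*),
  then v uniform on N_{G*}(u) - N_F(u). We return the law of v.\<close>
definition sample_v :: "'a set \<Rightarrow> 'a set \<Rightarrow> nat \<Rightarrow> nat \<Rightarrow> 'a set set \<Rightarrow> 'a \<Rightarrow> 'a pmf" where
  "sample_v VL VR s t F u =
     cond_pmf (pmf_of_set (bip_graphs VL VR s t)) {G. F \<subseteq> G}
       \<bind> (\<lambda>G. pmf_of_set (nbr G u - nbr F u))"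

end

theory Submission
  imports Defs
begin

text \<open>Conditioned on \<open>F \<subseteq> E(G*)\<close>, the graph \<open>G*\<close> is uniform on the graphs of the class
  containing \<open>F\<close>, and \<open>v\<close> is uniform on a set of the fixed size \<open>t - deg_F(u)\<close>. Hence
  \<open>Pr[v = y]\<close> is proportional to the number \<open>c(y)\<close> of these graphs in which \<open>u\<close> is adjacent
  to \<open>y\<close>. A switching argument shows \<open>c(y) \<le> c(x)\<close> whenever \<open>x\<close> has no \<open>F\<close>-edges and
  \<open>uy \<notin> F\<close>: in a graph with \<open>uy\<close> but not \<open>ux\<close>, replacing the edges \<open>uy, wx\<close> by
  \<open>ux, wy\<close> for \<open>w \<in> N(x) - N(y)\<close> maps the pairs \<open>(G, w)\<close> injectively to pairs \<open>(G', w)\<close>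
  with \<open>w \<in> N'(y) - N'(x)\<close>, and both differences have size \<open>s\<close> minus the codegree of
  \<open>x\<close> and \<open>y\<close>, which the switch preserves. So the vertices of \<open>F\<close>-degree \<open>0\<close> carry at
  least their share of the probability mass. Part (2) is part (1) with the sides exchanged.\<close>

lemma nbr_mono: "F \<subseteq> G \<Longrightarrow> nbr F v \<subseteq> nbr G v"
  by (auto simp: nbr_def)

lemma card_le_card_if_card_Diff_le:
  assumes "finite A" "finite B" "card (A - B) \<le> card (B - A)"
  shows "card A \<le> card B"
  using assms card_Int_Diff[of A B] card_Int_Diff[of B A] by (simp add: Int_commute)

lemma sum_card_Int_eq_sum_card_filter:
  assumes "finite A" "finite U" "\<And>a. a \<in> A \<Longrightarrow> S a \<subseteq> U"
  shows "(\<Sum>a\<in>A. card (S a \<inter> X)) = (\<Sum>y\<in>U \<inter> X. card {a\<in>A. y \<in> S a})"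
proof -
  have fin: "finite (U \<inter> X)"
    using assms(2) by simp
  have "(\<Sum>a\<in>A. card (S a \<inter> X)) = (\<Sum>a\<in>A. card {y\<in>U \<inter> X. y \<in> S a})"
    using assms(3) by (intro sum.cong refl arg_cong[where f = card]) auto
  also have "\<dots> = (\<Sum>a\<in>A. \<Sum>y\<in>U \<inter> X. if y \<in> S a then 1 else 0)"
    using fin by (simp only: card_eq_sum sum.inter_filter)
  also have "\<dots> = (\<Sum>y\<in>U \<inter> X. \<Sum>a\<in>A. if y \<in> S a then 1 else 0)"
    by (rule sum.swap)
  also have "\<dots> = (\<Sum>y\<in>U \<inter> X. card {a\<in>A. y \<in> S a})"
    using assms(1) by (simp only: card_eq_sum sum.inter_filter)
  finally show ?thesis .
qed

lemma cond_pmf_of_set: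
  assumes "finite A" "A \<inter> C \<noteq> {}"
  shows "cond_pmf (pmf_of_set A) C = pmf_of_set (A \<inter> C)"
proof (rule pmf_eqI)
  fix x
  have "A \<noteq> {}"
    using assms(2) by blast
  with assms show "pmf (cond_pmf (pmf_of_set A) C) x = pmf (pmf_of_set (A \<inter> C)) x"
    by (simp add: pmf_cond measure_pmf_of_set indicator_def Int_commute)
qed

lemma measure_bind_pmf_of_set_equal_card:
  assumes "finite A" "A \<noteq> {}" "finite U" "\<And>a. a \<in> A \<Longrightarrow> S a \<subseteq> U"
    and "\<And>a. a \<in> A \<Longrightarrow> card (S a) = k" "k > 0"
  shows "measure_pmf.prob (pmf_of_set A \<bind> (\<lambda>a. pmf_of_set (S a))) X
       = real (\<Sum>y\<in>U \<inter> X. card {a\<in>A. y \<in> S a}) / real (\<Sum>y\<in>U. card {a\<in>A. y \<in> S a})"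
proof -
  have S: "finite (S a)" "S a \<noteq> {}" if "a \<in> A" for a
    using finite_subset[OF assms(4)[OF that] assms(3)] assms(5)[OF that] assms(6) by auto
  have "measure_pmf.prob (pmf_of_set A \<bind> (\<lambda>a. pmf_of_set (S a))) X
      = measure_pmf.expectation (pmf_of_set A \<bind> (\<lambda>a. pmf_of_set (S a))) (indicator X)"
    by simp
  also have "\<dots> = (\<Sum>a\<in>A. measure_pmf.expectation (pmf_of_set (S a)) (indicator X) /\<^sub>R real (card A))"
    using assms(1,2) S by (intro pmf_expectation_bind_pmf_of_set) auto
  also have "\<dots> = (\<Sum>a\<in>A. real (card (S a \<inter> X)) / real k / real (card A))"
    using S assms(5) by (intro sum.cong refl) (simp add: measure_pmf_of_set field_simps)
  also have "\<dots> = real (\<Sum>a\<in>A. card (S a \<inter> X)) / real (\<Sum>a\<in>A. card (S a))"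
    using assms(5) by (simp add: sum_divide_distrib[symmetric])
  also have "(\<Sum>a\<in>A. card (S a \<inter> X)) = (\<Sum>y\<in>U \<inter> X. card {a\<in>A. y \<in> S a})"
    by (rule sum_card_Int_eq_sum_card_filter[OF assms(1,3,4)])
  also have "(\<Sum>a\<in>A. card (S a)) = (\<Sum>y\<in>U. card {a\<in>A. y \<in> S a})"
    using sum_card_Int_eq_sum_card_filter[OF assms(1,3,4), where X = UNIV] by simp
  finally show ?thesis .
qed

lemma card_le_card_if_inj_on_Sigma:
  assumes "finite A" "\<And>a. a \<in> A \<Longrightarrow> finite (S a)" "\<And>a. a \<in> A \<Longrightarrow> S a \<noteq> {}"
    and "finite B" "\<And>b. b \<in> B \<Longrightarrow> finite (T b)"
    and inj: "inj_on \<phi> (Sigma A S)" and into: "\<And>p. p \<in> Sigma A S \<Longrightarrow> \<phi> p \<in> Sigma B T"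
    and card_eq: "\<And>p. p \<in> Sigma A S \<Longrightarrow> card (T (fst (\<phi> p))) = card (S (fst p))"
  shows "card A \<le> card B"
proof -
  \<comment> \<open>Each \<open>a\<close> spreads weight \<open>1\<close> evenly over \<open>S a\<close>; \<open>\<phi>\<close> moves it into \<open>B\<close>, where every \<open>b\<close> receives at most \<open>1\<close>.\<close>
  have "real (card A) = (\<Sum>a\<in>A. 1)"
    by simp
  also have "\<dots> = (\<Sum>a\<in>A. \<Sum>w\<in>S a. 1 / real (card (S a)))"
    using assms(2,3) by (intro sum.cong refl) simp
  also have "\<dots> = (\<Sum>p\<in>Sigma A S. 1 / real (card (S (fst p))))"
    using sum.Sigma[OF assms(1), of S "\<lambda>a w. 1 / real (card (S a))"] assms(2) by (simp add: split_def)
  also have "\<dots> = (\<Sum>p\<in>Sigma A S. 1 / real (card (T (fst (\<phi> p)))))"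
    using card_eq by simp
  also have "\<dots> = (\<Sum>q\<in>\<phi> ` Sigma A S. 1 / real (card (T (fst q))))"
    using sum.reindex[OF inj, of "\<lambda>q. 1 / real (card (T (fst q)))"] by simp
  also have "\<dots> \<le> (\<Sum>q\<in>Sigma B T. 1 / real (card (T (fst q))))"
    using assms(4,5) into by (intro sum_mono2 image_subsetI) auto
  also have "\<dots> = (\<Sum>b\<in>B. \<Sum>w\<in>T b. 1 / real (card (T b)))"
    using sum.Sigma[OF assms(4), of T "\<lambda>b w. 1 / real (card (T b))"] assms(5) by (simp add: split_def)
  also have "\<dots> \<le> (\<Sum>b\<in>B. 1)"
    by (intro sum_mono) simp
  also have "\<dots> = real (card B)"
    by simp
  finally show ?thesis
    by (simp only: of_nat_le_iff)
qed

lemma sum_fraction_le_card_fraction: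
  fixes c :: "'a \<Rightarrow> nat"
  assumes "finite P" "finite Z" "P \<inter> Z = {}" "Y \<subseteq> P"
    and le: "\<And>y z. y \<in> Y \<Longrightarrow> z \<in> Z \<Longrightarrow> c y \<le> c z"
  shows "real (sum c Y) / real (sum c (Y \<union> Z)) \<le> real (card P) / real (card (P \<union> Z))"
proof -
  have Y: "finite Y" "Y \<inter> Z = {}" "card Y \<le> card P"
    using assms by (auto intro: finite_subset card_mono)
  have "card Z * sum c Y = (\<Sum>y\<in>Y. \<Sum>z\<in>Z. c y)"
    by (simp add: sum_distrib_left)
  also have "\<dots> \<le> (\<Sum>y\<in>Y. \<Sum>z\<in>Z. c z)"
    using le by (intro sum_mono) auto
  also have "\<dots> = card Y * sum c Z"
    by simp
  finally have "card Z * sum c Y \<le> card P * sum c Z"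
    using mult_right_mono[OF Y(3)] le_trans by blast
  then have "sum c Y * card (P \<union> Z) \<le> card P * sum c (Y \<union> Z)"
    using assms Y by (simp add: card_Un_disjoint sum.union_disjoint algebra_simps)
  then have key: "real (sum c Y) * real (card (P \<union> Z)) \<le> real (card P) * real (sum c (Y \<union> Z))"
    by (metis of_nat_le_iff of_nat_mult)
  show ?thesis
  proof (cases "sum c (Y \<union> Z) = 0")
    case False
    then have "card (P \<union> Z) > 0"
      using assms Y by (auto simp: card_gt_0_iff)
    moreover have cross_mult: "a / b \<le> p / n" if "0 < b" "0 < n" "a * n \<le> p * b" for a b p n :: real
      using that by (simp add: divide_simps)
    ultimately show ?thesis
      using False by (intro cross_mult[OF _ _ key]) (simp_all del: of_nat_sum)
  qed simp
qed

lemma card_insert_Diff_singleton: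
  assumes "finite A" "y \<in> A" "x \<notin> A"
  shows "card (insert x (A - {y})) = card A"
proof -
  have "x \<notin> A - {y}"
    using assms(3) by blast
  then show ?thesis
    using assms(1) card_Suc_Diff1[OF assms(1,2)] by (simp add: card_insert_disjoint del: card_Diff_singleton)
qed

definition switch_edges :: "'a set set \<Rightarrow> 'a \<Rightarrow> 'a \<Rightarrow> 'a \<Rightarrow> 'a \<Rightarrow> 'a set set" where
  "switch_edges G a1 b1 a2 b2 = insert {a1, b2} (insert {a2, b1} (G - {{a1, b1}, {a2, b2}}))"

context
  fixes a1 b1 a2 b2 :: 'a
  assumes distinct: "a1 \<noteq> a2" "b1 \<noteq> b2" "a1 \<noteq> b1" "a1 \<noteq> b2" "a2 \<noteq> b1" "a2 \<noteq> b2"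
begin

lemma nbr_switch_edges:
  "nbr (switch_edges G a1 b1 a2 b2) z =
    (if z = a1 then insert b2 (nbr G a1 - {b1})
     else if z = a2 then insert b1 (nbr G a2 - {b2})
     else if z = b1 then insert a2 (nbr G b1 - {a1})
     else if z = b2 then insert a1 (nbr G b2 - {a2})
     else nbr G z)"
  using distinct by (auto simp: nbr_def switch_edges_def doubleton_eq_iff)

lemma switch_edges_switch_edges:
  assumes "{a1, b1} \<in> G" "{a2, b2} \<in> G" "{a1, b2} \<notin> G" "{a2, b1} \<notin> G"
  shows "switch_edges (switch_edges G a1 b1 a2 b2) a1 b2 a2 b1 = G"
  using distinct assms unfolding switch_edges_def by (auto simp: doubleton_eq_iff)

lemma nbr_switch_edges_Int:
  assumes "{a1, b2} \<notin> G" "{a2, b1} \<notin> G"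
  shows "nbr (switch_edges G a1 b1 a2 b2) b1 \<inter> nbr (switch_edges G a1 b1 a2 b2) b2
       = nbr G b1 \<inter> nbr G b2"
  unfolding nbr_switch_edges using distinct assms by (auto simp: nbr_def insert_commute)

end

locale bipartition =
  fixes VL VR :: "'a set" and s t :: nat
  assumes finite_VL: "finite VL" and finite_VR: "finite VR" and disjoint_sides: "VL \<inter> VR = {}"
begin

abbreviation graphs :: "'a set set set" where
  "graphs \<equiv> bip_graphs VL VR s t"

lemma edge_sides:
  assumes "G \<in> graphs" "{v, w} \<in> G"
  shows "v \<in> VL \<and> w \<in> VR \<or> v \<in> VR \<and> w \<in> VL"
proof -
  obtain x y where "{v, w} = {x, y}" "x \<in> VL" "y \<in> VR"
    using assms by (auto simp: bip_graphs_def)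
  then show ?thesis
    by (auto simp: doubleton_eq_iff)
qed

lemma nbr_subset_VR: "G \<in> graphs \<Longrightarrow> v \<in> VL \<Longrightarrow> nbr G v \<subseteq> VR"
  using disjoint_sides edge_sides by (auto simp: nbr_def)

lemma nbr_subset_VL: "G \<in> graphs \<Longrightarrow> v \<in> VR \<Longrightarrow> nbr G v \<subseteq> VL"
  using disjoint_sides edge_sides by (auto simp: nbr_def)

lemma finite_nbr: "G \<in> graphs \<Longrightarrow> finite (nbr G v)"
proof -
  assume "G \<in> graphs"
  then have "nbr G v \<subseteq> VL \<union> VR"
    using edge_sides by (auto simp: nbr_def)
  then show ?thesis
    using finite_VL finite_VR by (auto intro: finite_subset)
qed

lemma finite_graphs: "finite graphs"
proof -
  have "graphs \<subseteq> Pow ((\<lambda>(x, y). {x, y}) ` (VL \<times> VR))"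
    by (auto simp: bip_graphs_def)
  then show ?thesis
    using finite_VL finite_VR by (auto intro: finite_subset)
qed

lemma card_nbr_Diff:
  assumes "G \<in> graphs" "v \<in> VR"
  shows "card (nbr G v - B) = s - card (nbr G v \<inter> B)"
proof -
  have "card (nbr G v) = s"
    using assms by (simp add: bip_graphs_def deg_def)
  then show ?thesis
    using finite_nbr[OF assms(1)] by (simp add: card_Diff_subset_Int)
qed

lemma switch_edges_in_graphs:
  assumes G: "G \<in> graphs" and "a1 \<in> VL" "a2 \<in> VL" "b1 \<in> VR" "b2 \<in> VR" "a1 \<noteq> a2" "b1 \<noteq> b2"
    and "{a1, b1} \<in> G" "{a2, b2} \<in> G" "{a1, b2} \<notin> G" "{a2, b1} \<notin> G"
  shows "switch_edges G a1 b1 a2 b2 \<in> graphs"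
proof -
  have distinct: "a1 \<noteq> b1" "a1 \<noteq> b2" "a2 \<noteq> b1" "a2 \<noteq> b2"
    using assms disjoint_sides by auto
  have "b1 \<in> nbr G a1" "b2 \<notin> nbr G a1" "b2 \<in> nbr G a2" "b1 \<notin> nbr G a2"
     "a1 \<in> nbr G b1" "a2 \<notin> nbr G b1" "a2 \<in> nbr G b2" "a1 \<notin> nbr G b2"
    using assms by (auto simp: nbr_def insert_commute)
  then have "deg (switch_edges G a1 b1 a2 b2) z = deg G z" for z
    unfolding deg_def nbr_switch_edges[OF \<open>a1 \<noteq> a2\<close> \<open>b1 \<noteq> b2\<close> distinct]
    using card_insert_Diff_singleton[OF finite_nbr[OF G]] by simp
  moreover have "switch_edges G a1 b1 a2 b2 \<subseteq> {{x, y} | x y. x \<in> VL \<and> y \<in> VR}"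
    using assms by (auto simp: switch_edges_def bip_graphs_def)
  ultimately show ?thesis
    using G by (simp add: bip_graphs_def)
qed

lemma switch_edges_reroute:
  assumes G: "G \<in> graphs" and u: "u \<in> VL" and x: "x \<in> VR" and y: "y \<in> VR" and "x \<noteq> y"
    and uy: "{u, y} \<in> G" and ux: "{u, x} \<notin> G" and w: "w \<in> nbr G x - nbr G y"
  defines "G' \<equiv> switch_edges G u y w x"
  shows "G' \<in> graphs" "G - {{u, y}, {w, x}} \<subseteq> G'" "{u, x} \<in> G'" "{u, y} \<notin> G'"
    and "w \<in> nbr G' y - nbr G' x" "card (nbr G' y - nbr G' x) = card (nbr G x - nbr G y)"
    and "switch_edges G' u x w y = G"
proof -
  have wx: "{w, x} \<in> G" and wy: "{w, y} \<notin> G"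
    using w by (auto simp: nbr_def insert_commute)
  have "w \<in> VL"
    using w nbr_subset_VL[OF G x] by auto
  then have distinct: "u \<noteq> w" "y \<noteq> x" "u \<noteq> y" "u \<noteq> x" "w \<noteq> y" "w \<noteq> x"
    using u x y \<open>x \<noteq> y\<close> ux wx disjoint_sides by auto
  show "G' \<in> graphs"
    unfolding G'_def using switch_edges_in_graphs[OF G u \<open>w \<in> VL\<close> y x] distinct uy ux wx wy by simp
  show "G - {{u, y}, {w, x}} \<subseteq> G'" "{u, x} \<in> G'"
    unfolding G'_def switch_edges_def by blast+
  show "{u, y} \<notin> G'"
    unfolding G'_def switch_edges_def using distinct by (simp add: doubleton_eq_iff)
  show "w \<in> nbr G' y - nbr G' x"
    unfolding G'_def nbr_switch_edges[OF distinct] using distinct by simp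
  have "nbr G' y \<inter> nbr G' x = nbr G y \<inter> nbr G x"
    unfolding G'_def using nbr_switch_edges_Int[OF distinct] ux wy by (simp add: insert_commute)
  then show "card (nbr G' y - nbr G' x) = card (nbr G x - nbr G y)"
    using card_nbr_Diff[OF \<open>G' \<in> graphs\<close> y] card_nbr_Diff[OF G x] by (simp add: Int_commute)
  show "switch_edges G' u x w y = G"
    unfolding G'_def using switch_edges_switch_edges[OF distinct] uy ux wx wy by (simp add: insert_commute)
qed

lemma card_switch_le:
  assumes u: "u \<in> VL" and x: "x \<in> VR" and y: "y \<in> VR" and "x \<noteq> y"
    and Fx: "nbr F x = {}" and Fuy: "{u, y} \<notin> F"
  shows "card {G\<in>graphs. F \<subseteq> G \<and> {u, y} \<in> G \<and> {u, x} \<notin> G}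
       \<le> card {G\<in>graphs. F \<subseteq> G \<and> {u, x} \<in> G \<and> {u, y} \<notin> G}"
    (is "card ?Ay \<le> card ?Ax")
proof -
  define S where "S G = nbr G x - nbr G y" for G
  define T where "T G = nbr G y - nbr G x" for G
  define \<phi> where "\<phi> = (\<lambda>(G, w). (switch_edges G u y w x, w))"
  define \<psi> where "\<psi> = (\<lambda>(G, w). (switch_edges G u x w y, w))"
  have switched: "\<phi> p \<in> Sigma ?Ax T" "card (T (fst (\<phi> p))) = card (S (fst p))" "\<psi> (\<phi> p) = p"
    if p: "p \<in> Sigma ?Ay S" for p
  proof -
    obtain G w where G: "G \<in> ?Ay" and w: "w \<in> S G" and p_eq: "p = (G, w)"
      using p by blast
    have "{w, x} \<notin> F"
      using Fx by (auto simp: nbr_def insert_commute)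
    then have F: "F \<subseteq> G - {{u, y}, {w, x}}"
      using G Fuy by auto
    have "G \<in> graphs" "{u, y} \<in> G" "{u, x} \<notin> G"
      using G by simp_all
    note reroute = switch_edges_reroute[OF this(1) u x y \<open>x \<noteq> y\<close> this(2,3) w[unfolded S_def]]
    have "F \<subseteq> switch_edges G u y w x"
      using F reroute(2) by (rule subset_trans)
    with reroute(1,3,4) have "switch_edges G u y w x \<in> ?Ax"
      by simp
    with reroute(5-7) show "\<phi> p \<in> Sigma ?Ax T" "card (T (fst (\<phi> p))) = card (S (fst p))" "\<psi> (\<phi> p) = p"
      unfolding p_eq \<phi>_def \<psi>_def S_def T_def by simp_all
  qed
  show ?thesis
  proof (rule card_le_card_if_inj_on_Sigma[where S = S and T = T and \<phi> = \<phi>])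
    show "finite ?Ay" "finite ?Ax"
      using finite_graphs by auto
    show "finite (S G)" if "G \<in> ?Ay" for G
      using that finite_nbr by (simp add: S_def)
    show "finite (T G)" if "G \<in> ?Ax" for G
      using that finite_nbr by (simp add: T_def)
    show "S G \<noteq> {}" if "G \<in> ?Ay" for G
    proof -
      have "u \<in> T G"
        using that by (auto simp: T_def nbr_def insert_commute)
      then have "card (T G) > 0"
        using that finite_nbr by (auto simp: T_def card_gt_0_iff)
      moreover have "G \<in> graphs"
        using that by simp
      then have "card (T G) = card (S G)"
        using card_nbr_Diff[OF _ x, of G "nbr G y"] card_nbr_Diff[OF _ y, of G "nbr G x"]
        by (simp add: S_def T_def Int_commute)
      ultimately show ?thesis
        by auto
    qed
    show "inj_on \<phi> (Sigma ?Ay S)"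
      using switched(3) by (rule inj_on_inverseI)
  qed (fact switched(1,2))+
qed

lemma card_adjacent_le_card_adjacent_isolated:
  assumes "u \<in> VL" "x \<in> VR" "y \<in> VR" "nbr F x = {}" "{u, y} \<notin> F"
  shows "card {G\<in>graphs. F \<subseteq> G \<and> y \<in> nbr G u} \<le> card {G\<in>graphs. F \<subseteq> G \<and> x \<in> nbr G u}"
    (is "card ?Y \<le> card ?X")
proof (cases "x = y")
  case False
  have "?Y - ?X = {G\<in>graphs. F \<subseteq> G \<and> {u, y} \<in> G \<and> {u, x} \<notin> G}"
    "?X - ?Y = {G\<in>graphs. F \<subseteq> G \<and> {u, x} \<in> G \<and> {u, y} \<notin> G}"
    unfolding nbr_def mem_Collect_eq by blast+
  then have "card (?Y - ?X) \<le> card (?X - ?Y)"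
    using card_switch_le[OF assms(1-3) False assms(4,5)] by (simp only:)
  then show ?thesis
    by (rule card_le_card_if_card_Diff_le[rotated 2]) (use finite_graphs in simp_all)
qed simp

lemma prob_sample_v_le:
  assumes "viable VL VR s t F" and u: "u \<in> VL" and "deg F u < t"
  shows "measure_pmf.prob (sample_v VL VR s t F u) {v. deg F v > 0}
           \<le> real (card {x\<in>VR. deg F x > 0}) / real (card VR)"
proof -
  obtain G0 where G0: "G0 \<in> graphs" "F \<subseteq> G0"
    using assms(1) by (auto simp: viable_def)
  define A where "A = {G\<in>graphs. F \<subseteq> G}"
  define N where "N = nbr F u"
  define P where "P = {x\<in>VR. deg F x > 0}"
  define c where "c y = card {G\<in>A. y \<in> nbr G u - N}" for y
  have finite_nbr_F: "finite (nbr F v)" for v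
    using finite_nbr[OF G0(1)] nbr_mono[OF G0(2)] by (rule finite_subset[rotated])
  have N_P: "N \<subseteq> P"
  proof
    fix w
    assume "w \<in> N"
    then have "w \<in> nbr G0 u" "u \<in> nbr F w"
      using G0(2) by (auto simp: N_def nbr_def insert_commute)
    then show "w \<in> P"
      using nbr_subset_VR[OF G0(1) u] finite_nbr_F[of w] by (auto simp: P_def deg_def card_gt_0_iff)
  qed
  have choices: "nbr G u - N \<subseteq> VR - N" "card (nbr G u - N) = t - deg F u" if "G \<in> A" for G
  proof -
    have "G \<in> graphs" "N \<subseteq> nbr G u"
      using that nbr_mono[of F G u] by (auto simp: A_def N_def)
    then show "nbr G u - N \<subseteq> VR - N" "card (nbr G u - N) = t - deg F u"
      using nbr_subset_VR[OF _ u] finite_nbr_F u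
      by (auto simp: card_Diff_subset N_def bip_graphs_def deg_def)
  qed
  have sample: "sample_v VL VR s t F u = pmf_of_set A \<bind> (\<lambda>G. pmf_of_set (nbr G u - N))"
  proof -
    have "graphs \<inter> {G. F \<subseteq> G} = A"
      by (auto simp: A_def)
    moreover have "A \<noteq> {}"
      using G0 by (auto simp: A_def)
    ultimately show ?thesis
      using cond_pmf_of_set[OF finite_graphs] by (simp add: sample_v_def N_def)
  qed
  have sets: "(VR - N) \<inter> {v. deg F v > 0} = P - N" "VR - N = (P - N) \<union> (VR - P)"
      "P \<union> (VR - P) = VR"
    using N_P by (auto simp: P_def)
  have "measure_pmf.prob (sample_v VL VR s t F u) {v. deg F v > 0}
      = real (sum c ((VR - N) \<inter> {v. deg F v > 0})) / real (sum c (VR - N))"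
    unfolding sample c_def
  proof (rule measure_bind_pmf_of_set_equal_card)
    show "finite A" "A \<noteq> {}"
      using G0 finite_graphs by (auto simp: A_def)
    show "finite (VR - N)"
      using finite_VR by simp
    show "0 < t - deg F u"
      using assms(3) by simp
  qed (fact choices)+
  also have "\<dots> \<le> real (card P) / real (card (P \<union> (VR - P)))"
    unfolding sets(1) unfolding sets(2)
  proof (rule sum_fraction_le_card_fraction)
    fix y z
    assume y: "y \<in> P - N" and z: "z \<in> VR - P"
    have "nbr F z = {}"
      using z finite_nbr_F[of z] by (auto simp: P_def deg_def)
    moreover have "{u, y} \<notin> F" "z \<notin> N"
      using y z N_P by (auto simp: N_def nbr_def)
    moreover have "c w = card {G\<in>graphs. F \<subseteq> G \<and> w \<in> nbr G u}" if "w \<notin> N" for w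
      unfolding c_def A_def using that by (intro arg_cong[where f = card]) auto
    ultimately show "c y \<le> c z"
      using card_adjacent_le_card_adjacent_isolated[OF u, of z y F] y z by (simp add: P_def)
  qed (use finite_VR in \<open>auto simp: P_def\<close>)
  finally show ?thesis
    unfolding sets(3) unfolding P_def .
qed

end

lemma bip_graphs_swap_sides: "bip_graphs VR VL t s = bip_graphs VL VR s t"
proof -
  have "{{x, y} | x y. x \<in> VR \<and> y \<in> VL} = {{x, y} | x y. x \<in> VL \<and> y \<in> VR}"
    by (auto simp: insert_commute)
  then show ?thesis
    unfolding bip_graphs_def by auto
qed

theorem lemma4p4:
  fixes VL VR :: "'a set" and m n s t :: nat and F :: "'a set set"
  assumes "finite VL" and "finite VR" and "VL \<inter> VR = {}"
    and "card VL = n" and "card VR = m"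
    and "bip_graphs VL VR s t \<noteq> {}"
    and "viable VL VR s t F"
  shows "(\<forall>u\<in>VL. deg F u < t \<longrightarrow>
            measure_pmf.prob (sample_v VL VR s t F u) {v. deg F v > 0}
              \<le> real (card {x\<in>VR. deg F x > 0}) / real (card VR))
       \<and> (\<forall>u\<in>VR. deg F u < s \<longrightarrow>
            measure_pmf.prob (sample_v VL VR s t F u) {v. deg F v > 0}
              \<le> real (card {x\<in>VL. deg F x > 0}) / real (card VL))"
proof -
  interpret left: bipartition VL VR s t
    using assms(1-3) by unfold_locales
  interpret right: bipartition VR VL t s
    using assms(1-3) by unfold_locales auto
  have viable_swapped: "viable VR VL t s F"
    and sample_swapped: "sample_v VR VL t s F = sample_v VL VR s t F"
    using assms(7) by (simp_all add: viable_def sample_v_def bip_graphs_swap_sides fun_eq_iff)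
  show ?thesis
    using left.prob_sample_v_le[OF assms(7)] right.prob_sample_v_le[OF viable_swapped]
    unfolding sample_swapped by blast
qed

end
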